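(* In the setting of the context, fix $\beta>0$. Then $\omega\in\overline{W_{\overline{\mathbb{R}}\times\{\beta\}}(T)\setminus i\mathbb{R}}$ if and only if $\omega\in\{0,\infty\}$ (only $\omega=\infty$ if $c=0$), or $\omega_\Im\neq0$ and one of the following four equations holds: $$\omega_\Re=\pm\sqrt{P_{\omega_\Im}\pm\sqrt{P_{\omega_\Im}^2-Q_{\omega_\Im}}-\omega_\Im^2},$$ where $$P_{\omega_\Im}:=c-\frac{d^2}{2}-d\omega_\Im-\frac{\beta d}{4\omega_\Im},\qquad Q_{\omega_\Im}:=\beta c+c^2+2cd\omega_\Im+4c\omega_\Im^2.$$
   Context: Let $c\ge0$, $d>0$, $\delta_\pm:=\pm\sqrt{c-d^2/4}-id/2$; $\sqrt{\cdot}$ is the principal square root. For real $\alpha,\beta$ let $p_{(\alpha,\beta)}(\omega):=(\alpha-\omega^2)(c-id\omega-\omega^2)-\beta\omega^2$ with roots $r_1,\dots,r_4$ labelled continuously in $(\alpha,\beta)\in\mathbb{R}^2$ and extended by limits to $\alpha=\pm\infty$ (roots $\delta_+,\delta_-$ and $\infty$ twice), values in $\overline{\mathbb{C}}$. $W_{\overline{\mathbb{R}}\times\{\beta\}}(T):=\bigcup_{n=1}^4\{r_n(\alpha,\beta):\alpha\in\mathbb{R}\cup\{\pm\infty\}\}$; overline denotes closure in $\overline{\mathbb{C}}$; $\omega=\omega_\Re+i\omega_\Im$. *)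

theory Defs
  imports "HOL-Analysis.Analysis"
begin

text \<open>The extended complex plane (Riemann sphere) is modelled as \<open>complex option\<close>,
  with \<open>None\<close> the point at infinity and \<open>Some z\<close> the finite point z.
  Its topology is the one-point compactification of the complex plane:
  U is open iff its finite part is open, and if U contains infinity then
  the complement of its finite part is compact.\<close>

definition ext_open :: "complex option set \<Rightarrow> bool" where
  "ext_open U \<longleftrightarrow> open (Some -` U) \<and> (None \<in> U \<longrightarrow> compact (- (Some -` U)))"

definition ext_plane :: "complex option topology" where
  "ext_plane = topology ext_open"

definition delta_p :: "real \<Rightarrow> real \<Rightarrow> complex" where
  "delta_p c d = csqrt (complex_of_real (c - d^2/4)) - \<i> * complex_of_real (d/2)"

definition delta_m :: "real \<Rightarrow> real \<Rightarrow> complex" where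
  "delta_m c d = - csqrt (complex_of_real (c - d^2/4)) - \<i> * complex_of_real (d/2)"

definition pT :: "real \<Rightarrow> real \<Rightarrow> real \<Rightarrow> real \<Rightarrow> complex \<Rightarrow> complex" where
  "pT c d \<alpha> \<beta> \<omega> =
     (complex_of_real \<alpha> - \<omega>^2) * (complex_of_real c - \<i> * complex_of_real d * \<omega> - \<omega>^2)
     - complex_of_real \<beta> * \<omega>^2"

text \<open>W over (extended reals) x {beta}: the union over all alpha in R of all roots of
  p_(alpha,beta), together with the limit roots delta_plus, delta_minus, infinity
  obtained at alpha = +-infinity.\<close>

definition W_ext :: "real \<Rightarrow> real \<Rightarrow> real \<Rightarrow> complex option set" where
  "W_ext c d \<beta> =
     Some ` {\<omega>. \<exists>\<alpha>::real. pT c d \<alpha> \<beta> \<omega> = 0}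
     \<union> {Some (delta_p c d), Some (delta_m c d), None}"

definition P_fun :: "real \<Rightarrow> real \<Rightarrow> real \<Rightarrow> real \<Rightarrow> real" where
  "P_fun c d \<beta> y = c - d^2/2 - d*y - \<beta>*d/(4*y)"

definition Q_fun :: "real \<Rightarrow> real \<Rightarrow> real \<Rightarrow> real \<Rightarrow> real" where
  "Q_fun c d \<beta> y = \<beta>*c + c^2 + 2*c*d*y + 4*c*y^2"

end

theory Submission
  imports Defs
begin

text \<open>Write \<open>\<omega> = x + iy\<close> and \<open>D = c - id\<omega> - \<omega>\<^sup>2\<close>. A point with \<open>x \<noteq> 0\<close> is a root of \<open>p\<close> for
  some real \<open>\<alpha>\<close> or one of \<open>\<delta>\<^sub>\<plusminus>\<close> (the zeros of \<open>D\<close>) iff \<open>(\<omega>\<^sup>2D + \<beta>\<omega>\<^sup>2)/D\<close> is real, and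
  \<open>Im((\<omega>\<^sup>2D + \<beta>\<omega>\<^sup>2) cnj D) = x G(x\<^sup>2, y)\<close> for a polynomial \<open>G\<close>; for \<open>y \<noteq> 0\<close>,
  \<open>G(x\<^sup>2, y) = 2y((x\<^sup>2+y\<^sup>2)\<^sup>2 - 2P(x\<^sup>2+y\<^sup>2) + Q)\<close>, whose zeros are the four equations.
  The zero set of \<open>G\<close> is closed, and on the real axis \<open>G = \<beta>dx\<^sup>2\<close>, so only \<open>0\<close> can be added
  there; it is a limit point iff \<open>c > 0\<close>. A point \<open>iy\<^sub>0\<close> with \<open>G(0, y\<^sub>0) = 0\<close> is a limit point
  because, by a local analysis of the root \<open>y\<^sub>0\<close>, \<open>G(u, y\<^sub>0)\<close> for small \<open>u > 0\<close> and \<open>G(0, y)\<close>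
  for suitable \<open>y\<close> near \<open>y\<^sub>0\<close> have opposite signs, so the intermediate value theorem gives
  zeros with \<open>u = x\<^sup>2 > 0\<close> nearby.\<close>

lemma istopology_ext_open: "istopology ext_open"
  unfolding istopology_def ext_open_def
proof (rule conjI; intro allI impI)
  fix S T :: "complex option set"
  assume S: "open (Some -` S) \<and> (None \<in> S \<longrightarrow> compact (- (Some -` S)))"
     and T: "open (Some -` T) \<and> (None \<in> T \<longrightarrow> compact (- (Some -` T)))"
  show "open (Some -` (S \<inter> T)) \<and> (None \<in> S \<inter> T \<longrightarrow> compact (- (Some -` (S \<inter> T))))"
  proof
    show "open (Some -` (S \<inter> T))" using S T by (simp add: vimage_Int open_Int)
    show "None \<in> S \<inter> T \<longrightarrow> compact (- (Some -` (S \<inter> T)))"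
      using S T by (simp add: vimage_Int compact_Un)
  qed
next
  fix K :: "complex option set set"
  assume K: "\<forall>S\<in>K. open (Some -` S) \<and> (None \<in> S \<longrightarrow> compact (- (Some -` S)))"
  have o: "open (Some -` \<Union>K)" using K by (auto simp: vimage_Union intro!: open_Union)
  moreover have "None \<in> \<Union>K \<longrightarrow> compact (- (Some -` \<Union>K))"
  proof
    assume "None \<in> \<Union>K"
    then obtain S where S: "S \<in> K" "None \<in> S" by auto
    then have c: "compact (- (Some -` S))" using K by auto
    have "- (Some -` \<Union>K) = - (Some -` S) \<inter> - (Some -` \<Union>K)" using S by auto
    moreover have "closed (- (Some -` \<Union>K))" using o by (simp add: closed_Compl)
    ultimately show "compact (- (Some -` \<Union>K))" using c by (metis compact_Int_closed)
  qed
  ultimately show "open (Some -` \<Union>K) \<and> (None \<in> \<Union>K \<longrightarrow> compact (- (Some -` \<Union>K)))" by blast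
qed

lemma openin_ext_plane: "openin ext_plane = ext_open"
  by (simp add: ext_plane_def istopology_ext_open)

lemma topspace_ext_plane: "topspace ext_plane = UNIV"
proof -
  have "openin ext_plane UNIV" by (simp add: openin_ext_plane ext_open_def)
  then show ?thesis using openin_subset by blast
qed

lemma None_in_closure_of_ext_plane: "None \<in> S \<Longrightarrow> None \<in> ext_plane closure_of S"
  using closure_of_subset[of S ext_plane] by (auto simp: topspace_ext_plane)

lemma Some_in_closure_of_ext_plane_iff: "Some z \<in> ext_plane closure_of S \<longleftrightarrow> z \<in> closure (Some -` S)"
proof
  assume h: "Some z \<in> ext_plane closure_of S"
  show "z \<in> closure (Some -` S)"
    unfolding closure_approachable
  proof (intro allI impI)
    fix e :: real assume e: "e > 0"
    have "openin ext_plane (Some ` ball z e)"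
      by (simp add: openin_ext_plane ext_open_def inj_vimage_image_eq)
    then obtain y where "y \<in> S" "y \<in> Some ` ball z e"
      using h e unfolding in_closure_of by (meson centre_in_ball image_eqI)
    then obtain w where "Some w \<in> S" "dist w z < e" by (auto simp: dist_commute)
    then show "\<exists>y\<in>Some -` S. dist y z < e" by blast
  qed
next
  assume h: "z \<in> closure (Some -` S)"
  show "Some z \<in> ext_plane closure_of S"
    unfolding in_closure_of topspace_ext_plane
  proof (intro conjI allI impI UNIV_I)
    fix T assume T: "Some z \<in> T \<and> openin ext_plane T"
    then have "open (Some -` T)" "z \<in> Some -` T" by (auto simp: openin_ext_plane ext_open_def)
    then obtain e where e: "e > 0" "ball z e \<subseteq> Some -` T" using open_contains_ball by blast
    then obtain w where w: "w \<in> Some -` S" "dist w z < e" using h unfolding closure_approachable by blast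
    then have "w \<in> ball z e" by (simp add: dist_commute)
    then show "\<exists>y. y \<in> S \<and> y \<in> T" using e w by blast
  qed
qed

lemma ex_real_mult_eq_iff_Im_mult_cnj:
  fixes D M :: complex
  assumes "D \<noteq> 0"
  shows "(\<exists>\<alpha>::real. of_real \<alpha> * D = M) \<longleftrightarrow> Im (M * cnj D) = 0"
proof
  assume "\<exists>\<alpha>::real. of_real \<alpha> * D = M"
  then obtain \<alpha> where "M = of_real \<alpha> * D" by metis
  then have "M * cnj D = of_real (\<alpha> * (cmod D)^2)"
    by (simp add: mult.assoc flip: complex_norm_square)
  then show "Im (M * cnj D) = 0" by simp
next
  assume "Im (M * cnj D) = 0"
  then have real: "M * cnj D = of_real (Re (M * cnj D))" by (simp add: complex_eq_iff)
  define \<alpha> where "\<alpha> = Re (M * cnj D) / (cmod D)^2"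
  have "of_real \<alpha> * (D * cnj D) = M * cnj D"
    using assms by (subst real) (simp add: \<alpha>_def flip: complex_norm_square)
  then have "of_real \<alpha> * D = M"
    using assms by (simp add: mult.assoc[symmetric])
  then show "\<exists>\<alpha>::real. of_real \<alpha> * D = M" by blast
qed

lemma eq_pm_csqrt_iff:
  fixes a w :: complex
  shows "(\<exists>s\<in>{1, -1::complex}. a = s * csqrt w) \<longleftrightarrow> a^2 = w"
proof
  assume "a^2 = w"
  then have "(a - csqrt w) * (a + csqrt w) = 0"
    using power2_csqrt[of w] by (simp add: algebra_simps power2_eq_square)
  then have "a = csqrt w \<or> a = - csqrt w" by (simp add: eq_neg_iff_add_eq_0)
  then show "\<exists>s\<in>{1, -1::complex}. a = s * csqrt w" by auto
qed auto

lemma sign_stable_near: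
  fixes g :: "'a::metric_space \<Rightarrow> real"
  assumes "isCont g x" "g x \<noteq> 0"
  shows "\<exists>\<delta>>0. \<forall>t. dist t x < \<delta> \<longrightarrow> g x * g t > 0"
proof -
  have "isCont (\<lambda>t. g x * g t) x" using assms(1) by (intro continuous_intros)
  moreover have "g x * g x > 0" using assms(2) not_real_square_gt_zero by blast
  ultimately have "eventually (\<lambda>t. g x * g t > 0) (at x)"
    unfolding isCont_def by (rule order_tendstoD(1))
  then obtain \<delta> where "\<delta> > 0" "\<And>t. t \<noteq> x \<Longrightarrow> dist t x < \<delta> \<Longrightarrow> g x * g t > 0"
    unfolding eventually_at by auto
  then show ?thesis using \<open>g x * g x > 0\<close> by metis
qed

lemma sign_near_root:
  fixes f g :: "real \<Rightarrow> real"
  assumes f: "\<And>t. f (y0 + t) = t ^ k * g t" and "isCont g 0" "g 0 \<noteq> 0" "e > 0"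
  shows "\<exists>y. y0 < y \<and> y < y0 + e \<and> g 0 * f y > 0"
    and "\<exists>y. y0 - e < y \<and> y < y0 \<and> (-1) ^ k * g 0 * f y > 0"
proof -
  obtain \<delta> where "\<delta> > 0" and \<delta>: "\<And>t. \<bar>t\<bar> < \<delta> \<Longrightarrow> g 0 * g t > 0"
    using sign_stable_near[OF assms(2,3)] by (auto simp: dist_real_def)
  define t where "t = min e \<delta> / 2"
  have t: "0 < t" "t < e" "\<bar>t\<bar> < \<delta>" "\<bar>-t\<bar> < \<delta>"
    using \<open>\<delta> > 0\<close> \<open>e > 0\<close> by (auto simp: t_def)
  have "g 0 * f (y0 + t) = t ^ k * (g 0 * g t)" using f[of t] by simp
  also have "\<dots> > 0" using \<delta>[of t] t by simp
  finally show "\<exists>y. y0 < y \<and> y < y0 + e \<and> g 0 * f y > 0"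
    using t by (intro exI[of _ "y0 + t"]) auto
  have "(-1) ^ k * g 0 * f (y0 + - t) = t ^ k * (g 0 * g (-t))"
    using f[of "-t"] by (simp add: power_minus[of t])
  also have "\<dots> > 0" using \<delta>[of "-t"] t by simp
  finally show "\<exists>y. y0 - e < y \<and> y < y0 \<and> (-1) ^ k * g 0 * f y > 0"
    using t by (intro exI[of _ "y0 - t"]) auto
qed

lemma zero_near_sign_change:
  fixes g :: "real \<Rightarrow> real \<Rightarrow> real"
  assumes cont_y: "\<And>u. continuous_on UNIV (g u)"
    and cont_u: "\<And>y. continuous_on UNIV (\<lambda>u. g u y)"
    and neg: "\<forall>e>0. \<exists>u. 0 < u \<and> u < e \<and> g u y0 < 0"
    and pos: "\<forall>e>0. \<exists>y. \<bar>y - y0\<bar> < e \<and> g 0 y > 0"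
    and "e > 0"
  shows "\<exists>u y. 0 < u \<and> u < e \<and> \<bar>y - y0\<bar> < e \<and> g u y = 0"
proof -
  obtain u1 where u1: "0 < u1" "u1 < e" "g u1 y0 < 0" using neg \<open>e > 0\<close> by blast
  have "isCont (g u1) y0" using cont_y by (simp add: continuous_on_eq_continuous_at)
  then obtain \<delta> where "\<delta> > 0" and \<delta>: "\<And>y. \<bar>y - y0\<bar> < \<delta> \<Longrightarrow> g u1 y0 * g u1 y > 0"
    using sign_stable_near u1(3) by (metis dist_real_def less_irrefl)
  obtain y where y: "\<bar>y - y0\<bar> < min e \<delta>" "g 0 y > 0"
    using pos \<open>e > 0\<close> \<open>\<delta> > 0\<close> by (meson min_less_iff_conj)
  have "g u1 y < 0" using \<delta>[of y] y u1(3) by (simp add: zero_less_mult_iff)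
  moreover have "continuous_on {0..u1} (\<lambda>u. g u y)" using cont_u continuous_on_subset by blast
  ultimately obtain u where "0 \<le> u" "u \<le> u1" "g u y = 0"
    using IVT2'[of "\<lambda>u. g u y" u1 0 0] y u1 by auto
  moreover have "u \<noteq> 0" using y calculation by auto
  ultimately show ?thesis using u1 y by (intro exI[of _ u] exI[of _ y]) auto
qed

lemma Complex_axis_in_closure_of_even_set:
  assumes "\<forall>e>0. \<exists>u y. 0 < u \<and> u < e \<and> \<bar>y - y0\<bar> < e \<and> P u y"
  shows "Complex 0 y0 \<in> closure {z. Re z \<noteq> 0 \<and> P ((Re z)^2) (Im z)}"
  unfolding closure_approachable
proof (intro allI impI)
  fix e :: real assume "e > 0"
  then obtain u y where uy: "0 < u" "u < (e/2)^2" "\<bar>y - y0\<bar> < e/2" "P u y"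
    using assms[rule_format, of "min (e/2) ((e/2)^2)"] by auto
  define w where "w = Complex (sqrt u) y"
  have "sqrt u < e/2" using uy \<open>e > 0\<close> real_sqrt_less_mono[of u "(e/2)^2"] by simp
  then have "dist w (Complex 0 y0) < e"
    using cmod_le[of "Complex (sqrt u) (y - y0)"] uy
    by (simp add: w_def dist_norm complex_diff)
  moreover have "Re w \<noteq> 0" "P ((Re w)^2) (Im w)" using uy by (auto simp: w_def)
  ultimately show "\<exists>w\<in>{z. Re z \<noteq> 0 \<and> P ((Re z)^2) (Im z)}. dist w (Complex 0 y0) < e" by blast
qed

definition lin_coeff :: "real \<Rightarrow> real \<Rightarrow> real \<Rightarrow> real \<Rightarrow> real" where
  "lin_coeff c d \<beta> y = 2*y*(d^2 + 2*d*y + 2*y^2 - 2*c) + \<beta>*d"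

definition axis_poly :: "real \<Rightarrow> real \<Rightarrow> real \<Rightarrow> real \<Rightarrow> real" where
  "axis_poly c d \<beta> y = 2*(c + d*y + y^2)^2 + \<beta>*(2*c + d*y)"

text \<open>\<open>curve c d \<beta> u y\<close> is \<open>G(u, y)\<close>, evaluated at \<open>u = (Re \<omega>)\<^sup>2\<close>, \<open>y = Im \<omega>\<close>.\<close>

definition curve :: "real \<Rightarrow> real \<Rightarrow> real \<Rightarrow> real \<Rightarrow> real \<Rightarrow> real" where
  "curve c d \<beta> u y = 2*y*u^2 + lin_coeff c d \<beta> y * u + y * axis_poly c d \<beta> y"

definition off_axis_curve :: "real \<Rightarrow> real \<Rightarrow> real \<Rightarrow> complex set" where
  "off_axis_curve c d \<beta> = {z. Re z \<noteq> 0 \<and> curve c d \<beta> ((Re z)^2) (Im z) = 0}"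

lemma continuous_on_curve [continuous_intros]:
  "continuous_on S f \<Longrightarrow> continuous_on S g \<Longrightarrow> continuous_on S (\<lambda>x. curve c d \<beta> (f x) (g x))"
  unfolding curve_def lin_coeff_def axis_poly_def by (intro continuous_intros)

lemma delta_factorisation:
  "(z - delta_p c d) * (z - delta_m c d) = - (of_real c - \<i> * of_real d * z - z^2)"
proof -
  have "(csqrt (of_real (c - d^2/4)))^2 = of_real (c - d^2/4)" by simp
  then show ?thesis unfolding delta_p_def delta_m_def
    by (simp add: algebra_simps power2_eq_square)
qed

lemma Im_root_numerator:
  fixes c d \<beta> :: real and z :: complex
  defines "D \<equiv> of_real c - \<i> * of_real d * z - z^2"
  shows "Im ((z^2 * D + of_real \<beta> * z^2) * cnj D) = Re z * curve c d \<beta> ((Re z)^2) (Im z)"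
proof -
  obtain x y where z: "z = Complex x y" by (metis complex.collapse)
  show ?thesis
    unfolding D_def z curve_def lin_coeff_def axis_poly_def
    by (simp add: power2_eq_square Complex_eq) algebra
qed

lemma Some_in_W_ext_off_axis_iff:
  assumes "Re z \<noteq> 0"
  shows "Some z \<in> W_ext c d \<beta> \<longleftrightarrow> curve c d \<beta> ((Re z)^2) (Im z) = 0"
proof -
  define D where "D = of_real c - \<i> * of_real d * z - z^2"
  define M where "M = z^2 * D + of_real \<beta> * z^2"
  have pT: "pT c d \<alpha> \<beta> z = 0 \<longleftrightarrow> of_real \<alpha> * D = M" for \<alpha>
    by (auto simp: pT_def D_def M_def algebra_simps)
  have "Some z \<in> W_ext c d \<beta> \<longleftrightarrow> (\<exists>\<alpha>::real. of_real \<alpha> * D = M) \<or> D = 0"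
    using delta_factorisation[of z c d] by (auto simp: W_ext_def pT D_def)
  also have "\<dots> \<longleftrightarrow> Im (M * cnj D) = 0"
    using ex_real_mult_eq_iff_Im_mult_cnj by (cases "D = 0") auto
  also have "\<dots> \<longleftrightarrow> curve c d \<beta> ((Re z)^2) (Im z) = 0"
    using Im_root_numerator[where c=c and d=d and \<beta>=\<beta> and z=z] assms by (simp add: D_def M_def)
  finally show ?thesis .
qed

lemma curve_eq_P_Q:
  assumes "y \<noteq> 0"
  shows "curve c d \<beta> (x^2) y = 2*y*((x^2 + y^2)^2 - 2*P_fun c d \<beta> y*(x^2 + y^2) + Q_fun c d \<beta> y)"
  using assms unfolding curve_def lin_coeff_def axis_poly_def P_fun_def Q_fun_def
  by (simp add: field_simps) algebra

lemma sign_sqrt_equations_iff_curve: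
  assumes "Im z \<noteq> 0"
  shows "(\<exists>s1\<in>{1, -1::complex}. \<exists>s2\<in>{1, -1::complex}.
               complex_of_real (Re z) =
                 s1 * csqrt (complex_of_real (P_fun c d \<beta> (Im z))
                             + s2 * csqrt (complex_of_real ((P_fun c d \<beta> (Im z))^2 - Q_fun c d \<beta> (Im z)))
                             - complex_of_real ((Im z)^2)))
         \<longleftrightarrow> curve c d \<beta> ((Re z)^2) (Im z) = 0" (is "?L \<longleftrightarrow> _")
proof -
  define P where "P = P_fun c d \<beta> (Im z)"
  define Q where "Q = Q_fun c d \<beta> (Im z)"
  define x where "x = Re z"
  define y where "y = Im z"
  have "?L \<longleftrightarrow> (\<exists>s2\<in>{1, -1::complex}.
     (of_real x)^2 = of_real P + s2 * csqrt (of_real (P^2 - Q)) - of_real (y^2))"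
    unfolding P_def Q_def x_def y_def using eq_pm_csqrt_iff by blast
  also have "\<dots> \<longleftrightarrow> (\<exists>s2\<in>{1, -1::complex}. of_real (x^2 + y^2 - P) = s2 * csqrt (of_real (P^2 - Q)))"
    by (auto simp: algebra_simps)
  also have "\<dots> \<longleftrightarrow> (x^2 + y^2 - P)^2 = P^2 - Q"
    unfolding eq_pm_csqrt_iff by (metis of_real_eq_iff of_real_power)
  also have "\<dots> \<longleftrightarrow> (x^2 + y^2)^2 - 2*P*(x^2 + y^2) + Q = 0"
  proof -
    have "(x^2 + y^2 - P)^2 - (P^2 - Q) = (x^2 + y^2)^2 - 2*P*(x^2 + y^2) + Q" by algebra
    then show ?thesis by (metis eq_iff_diff_eq_0)
  qed
  also have "\<dots> \<longleftrightarrow> 2*y*((x^2 + y^2)^2 - 2*P*(x^2 + y^2) + Q) = 0"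
    using assms by (simp add: y_def)
  also have "\<dots> \<longleftrightarrow> curve c d \<beta> ((Re z)^2) (Im z) = 0"
    using curve_eq_P_Q[OF assms, of c d \<beta> x] by (simp add: P_def Q_def x_def y_def)
  finally show ?thesis .
qed

definition axis_poly_deriv :: "real \<Rightarrow> real \<Rightarrow> real \<Rightarrow> real \<Rightarrow> real" where
  "axis_poly_deriv c d \<beta> y = 4*(c + d*y + y^2)*(d + 2*y) + \<beta>*d"

definition axis_poly_coeff2 :: "real \<Rightarrow> real \<Rightarrow> real \<Rightarrow> real \<Rightarrow> real" where
  "axis_poly_coeff2 c d \<beta> y = 2*(d + 2*y)^2 + 4*(c + d*y + y^2)"

lemma axis_poly_taylor:
  "axis_poly c d \<beta> (y0 + t) = axis_poly c d \<beta> y0 + axis_poly_deriv c d \<beta> y0 * t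
     + axis_poly_coeff2 c d \<beta> y0 * t^2 + 4*(d + 2*y0) * t^3 + 2 * t^4"
  unfolding axis_poly_def axis_poly_deriv_def axis_poly_coeff2_def by algebra

lemma axis_poly_sign_change_at_simple_root:
  assumes "axis_poly c d \<beta> y0 = 0" "axis_poly_deriv c d \<beta> y0 \<noteq> 0" "e > 0"
  shows "\<exists>y. y0 - e < y \<and> y < y0 + e \<and> axis_poly c d \<beta> y > 0"
    and "\<exists>y. y0 - e < y \<and> y < y0 + e \<and> axis_poly c d \<beta> y < 0"
proof -
  define h1 where "h1 = axis_poly_deriv c d \<beta> y0"
  define g where "g t = h1 + axis_poly_coeff2 c d \<beta> y0 * t + 4*(d + 2*y0)*t^2 + 2*t^3" for t
  have factor: "axis_poly c d \<beta> (y0 + t) = t^1 * g t" for t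
    using axis_poly_taylor[of c d \<beta> y0 t] assms(1)
    by (simp add: g_def h1_def algebra_simps power2_eq_square power3_eq_cube power4_eq_xxxx)
  have "isCont g 0" unfolding g_def by (intro continuous_intros)
  then obtain y1 y2 where "y0 < y1" "y1 < y0 + e" "h1 * axis_poly c d \<beta> y1 > 0"
    and "y0 - e < y2" "y2 < y0" "- h1 * axis_poly c d \<beta> y2 > 0"
    using sign_near_root[OF factor _ _ \<open>e > 0\<close>] assms(2) by (auto simp: g_def h1_def)
  moreover have "h1 > 0 \<or> h1 < 0" using assms(2) by (auto simp: h1_def)
  ultimately show "\<exists>y. y0 - e < y \<and> y < y0 + e \<and> axis_poly c d \<beta> y > 0"
    and "\<exists>y. y0 - e < y \<and> y < y0 + e \<and> axis_poly c d \<beta> y < 0"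
    by (smt (verit) mult_minus_left zero_less_mult_iff)+
qed

lemma axis_poly_multiple_root:
  assumes "d > 0" "\<beta> > 0" "axis_poly c d \<beta> y0 = 0" "axis_poly_deriv c d \<beta> y0 = 0"
  shows "3 * lin_coeff c d \<beta> y0 + y0 * axis_poly_coeff2 c d \<beta> y0 = 0"
proof -
  define A where "A = c + d*y0 + y0^2"
  have h1: "4*A*(d + 2*y0) + \<beta>*d = 0" using assms(4) by (simp add: axis_poly_deriv_def A_def)
  have "A \<noteq> 0"
  proof
    assume "A = 0"
    then have "\<beta> * d = 0" using h1 by simp
    then show False using assms(1,2) by simp
  qed
  have "2*A*(d*A - 2*(d + 2*y0)*(2*c + d*y0))
      = d * axis_poly c d \<beta> y0 - (2*c + d*y0) * (4*A*(d + 2*y0) + \<beta>*d)"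
    unfolding axis_poly_def A_def by algebra
  then have "d*A - 2*(d + 2*y0)*(2*c + d*y0) = 0"
    using assms(3) h1 \<open>A \<noteq> 0\<close> by simp
  moreover have "6 * lin_coeff c d \<beta> y0 + 2*y0*axis_poly_coeff2 c d \<beta> y0
      = 8*(d*A - 2*(d + 2*y0)*(2*c + d*y0)) + 6*(4*A*(d + 2*y0) + \<beta>*d)"
    unfolding lin_coeff_def axis_poly_coeff2_def A_def by algebra
  ultimately show ?thesis using h1 by simp
qed

lemma axis_poly_sign_at_multiple_root:
  assumes "d > 0" "\<beta> > 0" "y0 < 0" "axis_poly c d \<beta> y0 = 0" "axis_poly_deriv c d \<beta> y0 = 0"
    and "e > 0"
  shows "\<exists>y. y0 - e < y \<and> y < y0 + e \<and>
           (if lin_coeff c d \<beta> y0 > 0 then 1 else -1) * axis_poly c d \<beta> y > 0"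
proof -
  define L where "L = lin_coeff c d \<beta> y0"
  define h2 where "h2 = axis_poly_coeff2 c d \<beta> y0"
  define w where "w = d + 2*y0"
  have taylor: "axis_poly c d \<beta> (y0 + t) = t^2 * (h2 + 4*w*t + 2*t^2)" for t
    using axis_poly_taylor[of c d \<beta> y0 t] assms(4,5)
    by (simp add: h2_def w_def algebra_simps power2_eq_square power3_eq_cube power4_eq_xxxx)
  have "3 * L = (- y0) * h2"
    using axis_poly_multiple_root[OF assms(1,2,4,5)] by (simp add: L_def h2_def)
  show ?thesis
  proof (cases "h2 = 0")
    case False
    have "(- y0) * h2 > 0 \<longleftrightarrow> h2 > 0" using assms(3) by (simp add: mult_less_0_iff)
    then have "L > 0 \<longleftrightarrow> h2 > 0" "L \<noteq> 0" using \<open>3 * L = (- y0) * h2\<close> False assms(3) by auto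
    moreover have "isCont (\<lambda>t. h2 + 4*w*t + 2*t^2) 0" by (intro continuous_intros)
    then obtain y where "y0 < y" "y < y0 + e" "h2 * axis_poly c d \<beta> y > 0"
      using sign_near_root(1)[OF taylor _ _ \<open>e > 0\<close>] False by auto
    ultimately show ?thesis unfolding L_def[symmetric]
      by (intro exI[of _ y]) (auto simp: zero_less_mult_iff)
  next
    case True
    have "\<beta>*d = 2*w^3"
      using assms(5) True unfolding axis_poly_deriv_def axis_poly_coeff2_def h2_def w_def
      by algebra
    moreover have "\<beta>*d > 0" using assms(1,2) by simp
    ultimately have "w^3 > 0" by simp
    then have "w > 0" by (simp add: zero_less_power_eq)
    have factor: "axis_poly c d \<beta> (y0 + t) = t^3 * (4*w + 2*t)" for t
      using taylor[of t] True by (simp add: algebra_simps power2_eq_square power3_eq_cube)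
    have "isCont (\<lambda>t. 4*w + 2*t) 0" by (intro continuous_intros)
    then obtain y where "y0 - e < y" "y < y0" "- (4*w) * axis_poly c d \<beta> y > 0"
      using sign_near_root(2)[OF factor _ _ \<open>e > 0\<close>] \<open>w > 0\<close> by auto
    moreover have "L = 0" using \<open>3 * L = (- y0) * h2\<close> True by simp
    ultimately show ?thesis using \<open>w > 0\<close> unfolding L_def[symmetric]
      by (intro exI[of _ y]) (auto simp: mult_less_0_iff)
  qed
qed

lemma axis_poly_sign_near_root:
  assumes "d > 0" "\<beta> > 0" "y0 < 0" "axis_poly c d \<beta> y0 = 0" "e > 0"
  shows "\<exists>y. \<bar>y - y0\<bar> < e \<and> y < 0 \<and>
           (if lin_coeff c d \<beta> y0 > 0 then 1 else -1) * axis_poly c d \<beta> y > 0"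
proof -
  define e' where "e' = min e (- y0)"
  have "e' > 0" using assms(3,5) by (simp add: e'_def)
  have "\<exists>y. y0 - e' < y \<and> y < y0 + e' \<and>
           (if lin_coeff c d \<beta> y0 > 0 then 1 else -1) * axis_poly c d \<beta> y > 0"
  proof (cases "axis_poly_deriv c d \<beta> y0 = 0")
    case True
    then show ?thesis using axis_poly_sign_at_multiple_root[OF assms(1-4) _ \<open>e' > 0\<close>] by blast
  next
    case False
    then show ?thesis using axis_poly_sign_change_at_simple_root[OF assms(4) _ \<open>e' > 0\<close>] by auto
  qed
  then obtain y where "y0 - e' < y" "y < y0 + e'"
    "(if lin_coeff c d \<beta> y0 > 0 then 1 else -1) * axis_poly c d \<beta> y > 0"
    by blast
  then show ?thesis by (intro exI[of _ y]) (auto simp: e'_def)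
qed

lemma axis_poly_root_nonpos:
  assumes "c \<ge> 0" "d > 0" "\<beta> > 0" "axis_poly c d \<beta> y0 = 0"
  shows "y0 \<le> 0"
proof -
  have "\<beta> * (2*c + d*y0) \<le> 0"
    using assms(4) unfolding axis_poly_def by (smt (verit) zero_le_power2)
  then have "d * y0 \<le> 0" using assms(1,3) by (smt (verit) mult_pos_pos)
  then show ?thesis using assms(2) by (simp add: mult_le_0_iff)
qed

lemma curve_sign_near_axis:
  assumes "d > 0" "\<beta> > 0" "y0 \<le> 0" "y0 * axis_poly c d \<beta> y0 = 0" "e > 0"
  shows "\<exists>u. 0 < u \<and> u < e \<and> (if lin_coeff c d \<beta> y0 > 0 then 1 else -1) * curve c d \<beta> u y0 > 0"
proof -
  define L where "L = lin_coeff c d \<beta> y0"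
  have curve_y0: "curve c d \<beta> u y0 = u * (2*y0*u + L)" for u
    using assms(4) by (simp add: curve_def L_def algebra_simps power2_eq_square)
  show ?thesis
  proof (cases "L = 0")
    case True
    then have "y0 \<noteq> 0" using assms(1,2) by (auto simp: L_def lin_coeff_def)
    then have "curve c d \<beta> (e/2) y0 < 0"
      using assms(3,5) True by (simp add: curve_y0 mult_pos_neg mult_neg_pos)
    then show ?thesis using True assms(5) by (intro exI[of _ "e/2"]) (simp add: L_def)
  next
    case False
    have "isCont (\<lambda>u. 2*y0*u + L) 0" by (intro continuous_intros)
    then obtain u where "0 < u" "u < e" "L * curve c d \<beta> u y0 > 0"
      using sign_near_root(1)[of "\<lambda>u. curve c d \<beta> u y0" 0 1 "\<lambda>u. 2*y0*u + L"] False assms(5)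
      by (auto simp: curve_y0)
    then show ?thesis by (intro exI[of _ u]) (auto simp: L_def[symmetric] zero_less_mult_iff)
  qed
qed

lemma axis_point_in_closure:
  assumes curve_sign: "\<forall>e>0. \<exists>u. 0 < u \<and> u < e \<and> s * curve c d \<beta> u y0 > 0"
    and axis_sign: "\<forall>e>0. \<exists>y. \<bar>y - y0\<bar> < e \<and> y < 0 \<and> s * axis_poly c d \<beta> y > 0"
  shows "Complex 0 y0 \<in> closure (off_axis_curve c d \<beta>)"
proof -
  obtain u where "s * curve c d \<beta> u y0 > 0" using curve_sign zero_less_one by blast
  then have "s \<noteq> 0" by auto
  have "\<forall>e>0. \<exists>u y. 0 < u \<and> u < e \<and> \<bar>y - y0\<bar> < e \<and> - s * curve c d \<beta> u y = 0"
  proof (intro allI impI, rule zero_near_sign_change)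
    show "continuous_on UNIV (\<lambda>y. - s * curve c d \<beta> u y)"
      "continuous_on UNIV (\<lambda>u. - s * curve c d \<beta> u y)" for u y
      by (intro continuous_intros)+
    show "\<forall>e>0. \<exists>u. 0 < u \<and> u < e \<and> - s * curve c d \<beta> u y0 < 0"
      using curve_sign by auto
    show "\<forall>e>0. \<exists>y. \<bar>y - y0\<bar> < e \<and> - s * curve c d \<beta> 0 y > 0"
    proof (intro allI impI)
      fix e :: real assume "e > 0"
      then obtain y where y: "\<bar>y - y0\<bar> < e" "y < 0" "s * axis_poly c d \<beta> y > 0"
        using axis_sign by blast
      have "- s * curve c d \<beta> 0 y = (- y) * (s * axis_poly c d \<beta> y)"
        by (simp add: curve_def)
      also have "\<dots> > 0" using y mult_pos_pos[of "- y" "s * axis_poly c d \<beta> y"] by simp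
      finally show "\<exists>y. \<bar>y - y0\<bar> < e \<and> - s * curve c d \<beta> 0 y > 0" using y by blast
    qed
  qed
  then show ?thesis
    using Complex_axis_in_closure_of_even_set[where P = "\<lambda>u y. curve c d \<beta> u y = 0"] \<open>s \<noteq> 0\<close>
    by (simp add: off_axis_curve_def)
qed

lemma axis_root_in_closure:
  assumes "c \<ge> 0" "d > 0" "\<beta> > 0"
    and root: "(y0 = 0 \<and> c \<noteq> 0) \<or> (y0 \<noteq> 0 \<and> axis_poly c d \<beta> y0 = 0)"
  shows "Complex 0 y0 \<in> closure (off_axis_curve c d \<beta>)"
proof (rule axis_point_in_closure)
  define \<sigma> :: real where "\<sigma> = (if lin_coeff c d \<beta> y0 > 0 then 1 else -1)"
  have "y0 \<le> 0" using root axis_poly_root_nonpos[OF assms(1-3)] by auto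
  moreover have "y0 * axis_poly c d \<beta> y0 = 0" using root by auto
  ultimately show "\<forall>e>0. \<exists>u. 0 < u \<and> u < e \<and> \<sigma> * curve c d \<beta> u y0 > 0"
    using curve_sign_near_axis[OF assms(2,3)] unfolding \<sigma>_def by blast
  show "\<forall>e>0. \<exists>y. \<bar>y - y0\<bar> < e \<and> y < 0 \<and> \<sigma> * axis_poly c d \<beta> y > 0"
  proof (intro allI impI)
    fix e :: real assume "e > 0"
    show "\<exists>y. \<bar>y - y0\<bar> < e \<and> y < 0 \<and> \<sigma> * axis_poly c d \<beta> y > 0"
    proof (cases "y0 = 0")
      case True
      then have "c > 0" using root assms(1) by auto
      then have "\<sigma> = 1" "axis_poly c d \<beta> 0 > 0"
        using True assms(2,3) by (simp_all add: \<sigma>_def lin_coeff_def axis_poly_def add_pos_pos)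
      moreover have "isCont (axis_poly c d \<beta>) 0" unfolding axis_poly_def by (intro continuous_intros)
      ultimately obtain y where "- e < y" "y < 0" "axis_poly c d \<beta> 0 * axis_poly c d \<beta> y > 0"
        using sign_near_root(2)[of "axis_poly c d \<beta>" 0 0 "axis_poly c d \<beta>" e] \<open>e > 0\<close>
        by auto
      then show ?thesis using True \<open>\<sigma> = 1\<close> \<open>axis_poly c d \<beta> 0 > 0\<close>
        by (intro exI[of _ y]) (auto simp: zero_less_mult_iff)
    next
      case False
      then show ?thesis
        using axis_poly_sign_near_root[OF assms(2,3) _ _ \<open>e > 0\<close>] root \<open>y0 \<le> 0\<close>
        unfolding \<sigma>_def by auto
    qed
  qed
qed

lemma origin_notin_closure_off_axis_curve:
  assumes "d > 0" "\<beta> > 0"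
  shows "0 \<notin> closure (off_axis_curve 0 d \<beta>)"
proof
  assume "0 \<in> closure (off_axis_curve 0 d \<beta>)"
  define F1 where "F1 w = lin_coeff 0 d \<beta> (Im w) + 2 * Im w * (Re w)^2" for w
  define F2 where "F2 w = \<beta> * d + 2 * Im w * (d + Im w)^2" for w
  have split: "curve 0 d \<beta> ((Re w)^2) (Im w) = (Re w)^2 * F1 w + (Im w)^2 * F2 w" for w
    unfolding curve_def F1_def F2_def axis_poly_def by algebra
  have "isCont (\<lambda>w. min (F1 w) (F2 w)) 0"
    unfolding F1_def F2_def lin_coeff_def
    by (intro continuous_intros continuous_Re[OF continuous_ident] continuous_Im[OF continuous_ident])
  moreover have "min (F1 0) (F2 0) = \<beta> * d" by (simp add: F1_def F2_def lin_coeff_def)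
  ultimately obtain \<delta> where "\<delta> > 0" and \<delta>: "\<And>w. dist w 0 < \<delta> \<Longrightarrow> \<beta> * d * min (F1 w) (F2 w) > 0"
    using sign_stable_near[where g = "\<lambda>w. min (F1 w) (F2 w)" and x = 0] assms by auto
  obtain w where w: "w \<in> off_axis_curve 0 d \<beta>" "dist w 0 < \<delta>"
    using \<open>0 \<in> closure _\<close> \<open>\<delta> > 0\<close> unfolding closure_approachable by blast
  have "\<beta> * d > 0" using assms by simp
  then have "min (F1 w) (F2 w) > 0" using \<delta>[OF w(2)] zero_less_mult_pos by blast
  then have "F1 w > 0" "F2 w > 0" by simp_all
  moreover have "(Re w)^2 > 0" using w(1) by (simp add: off_axis_curve_def)
  ultimately have "curve 0 d \<beta> ((Re w)^2) (Im w) > 0"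
    unfolding split by (intro add_pos_nonneg mult_pos_pos mult_nonneg_nonneg) auto
  then show False using w(1) by (simp add: off_axis_curve_def)
qed

lemma closure_off_axis_curve:
  assumes "c \<ge> 0" "d > 0" "\<beta> > 0"
  shows "z \<in> closure (off_axis_curve c d \<beta>)
     \<longleftrightarrow> (z = 0 \<and> c \<noteq> 0) \<or> (Im z \<noteq> 0 \<and> curve c d \<beta> ((Re z)^2) (Im z) = 0)"
proof
  assume z: "z \<in> closure (off_axis_curve c d \<beta>)"
  have "closed {z. curve c d \<beta> ((Re z)^2) (Im z) = 0}"
    by (intro closed_Collect_eq continuous_intros)
  then have "closure (off_axis_curve c d \<beta>) \<subseteq> {z. curve c d \<beta> ((Re z)^2) (Im z) = 0}"
    by (intro closure_minimal) (auto simp: off_axis_curve_def)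
  then have curve_z: "curve c d \<beta> ((Re z)^2) (Im z) = 0" using z by blast
  show "(z = 0 \<and> c \<noteq> 0) \<or> (Im z \<noteq> 0 \<and> curve c d \<beta> ((Re z)^2) (Im z) = 0)"
  proof (cases "Im z = 0")
    case True
    then have "\<beta> * d * (Re z)^2 = 0" using curve_z by (simp add: curve_def lin_coeff_def)
    then have "z = 0" using True assms(2,3) by (simp add: complex_eq_iff)
    then show ?thesis using z origin_notin_closure_off_axis_curve[OF assms(2,3)] by auto
  qed (use curve_z in blast)
next
  assume z: "(z = 0 \<and> c \<noteq> 0) \<or> (Im z \<noteq> 0 \<and> curve c d \<beta> ((Re z)^2) (Im z) = 0)"
  show "z \<in> closure (off_axis_curve c d \<beta>)"
  proof (cases "Re z = 0")
    case True
    then have "z = Complex 0 (Im z)" by (simp add: complex_eq_iff)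
    moreover have "(Im z = 0 \<and> c \<noteq> 0) \<or> (Im z \<noteq> 0 \<and> axis_poly c d \<beta> (Im z) = 0)"
      using z True by (auto simp: curve_def)
    ultimately show ?thesis using axis_root_in_closure[OF assms] by metis
  next
    case False
    then show ?thesis using z closure_subset by (fastforce simp: off_axis_curve_def)
  qed
qed

theorem proposition3p7:
  fixes c d \<beta> :: real and \<omega> :: "complex option"
  assumes "c \<ge> 0" and "d > 0" and "\<beta> > 0"
  shows "\<omega> \<in> ext_plane closure_of (W_ext c d \<beta> - Some ` {z. Re z = 0})
    \<longleftrightarrow> (\<omega> = None \<or> (\<omega> = Some 0 \<and> c \<noteq> 0) \<or>
         (\<exists>z. \<omega> = Some z \<and> Im z \<noteq> 0 \<and>
            (\<exists>s1\<in>{1, -1::complex}. \<exists>s2\<in>{1, -1::complex}.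
               complex_of_real (Re z) =
                 s1 * csqrt (complex_of_real (P_fun c d \<beta> (Im z))
                             + s2 * csqrt (complex_of_real ((P_fun c d \<beta> (Im z))^2 - Q_fun c d \<beta> (Im z)))
                             - complex_of_real ((Im z)^2)))))"
proof (cases \<omega>)
  case None
  have "None \<in> W_ext c d \<beta> - Some ` {z. Re z = 0}" by (auto simp: W_ext_def)
  then show ?thesis using None_in_closure_of_ext_plane None by auto
next
  case (Some z)
  have "Some -` (W_ext c d \<beta> - Some ` {z. Re z = 0}) = off_axis_curve c d \<beta>"
    by (auto simp: off_axis_curve_def inj_image_mem_iff Some_in_W_ext_off_axis_iff)
  then have "\<omega> \<in> ext_plane closure_of (W_ext c d \<beta> - Some ` {z. Re z = 0})
      \<longleftrightarrow> (z = 0 \<and> c \<noteq> 0) \<or> (Im z \<noteq> 0 \<and> curve c d \<beta> ((Re z)^2) (Im z) = 0)"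
    unfolding Some Some_in_closure_of_ext_plane_iff using closure_off_axis_curve[OF assms] by simp
  then show ?thesis using sign_sqrt_equations_iff_curve[of z c d \<beta>] Some by auto
qed

end
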